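(* Let $\mathcal{A}$ be a semi-abelian category, and let $m:I\to A$ be a kernel (equivalently, a normal monic) in $\mathcal{A}$. The following are equivalent: (1) $m$ is an essential monic; (2) whenever $f:A\to B$ is an arrow such that $fm$ is a normal monic, $f$ is monic; (3) if $g:J\to A$ is a normal monic with $g\perp m$, then $g=0$ (i.e. $J$ is a zero object).
   Context: In a semi-abelian category, normal monics coincide with kernels; the ideals of an object $A$ are the subobjects of $A$ represented by normal monics with target $A$, and they form a bounded lattice. For normal monics (ideals) $g,m$ with target $A$, write $g\perp m$ if their meet in the lattice of ideals of $A$ is $0$ (equivalently, the pullback of $g$ and $m$ is a zero object). An arrow $m$ is an essential monic if $m$ is monic and for every arrow $g$ such that $gm$ is defined and monic, $g$ is monic. *)

theory Defs
  imports Main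
begin

section \<open>Categories (arrows of type 'a, objects of type 'o); Comp C g f means g after f\<close>

record ('o, 'a) cat =
  Obj :: "'o set"
  Arr :: "'a set"
  Dom :: "'a \<Rightarrow> 'o"
  Cod :: "'a \<Rightarrow> 'o"
  Id  :: "'o \<Rightarrow> 'a"
  Comp :: "'a \<Rightarrow> 'a \<Rightarrow> 'a"

definition category :: "('o, 'a) cat \<Rightarrow> bool" where
  "category C \<longleftrightarrow>
     (\<forall>f\<in>Arr C. Dom C f \<in> Obj C \<and> Cod C f \<in> Obj C) \<and>
     (\<forall>a\<in>Obj C. Id C a \<in> Arr C \<and> Dom C (Id C a) = a \<and> Cod C (Id C a) = a) \<and>
     (\<forall>f\<in>Arr C. \<forall>g\<in>Arr C. Cod C f = Dom C g \<longrightarrow>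
        Comp C g f \<in> Arr C \<and> Dom C (Comp C g f) = Dom C f \<and> Cod C (Comp C g f) = Cod C g) \<and>
     (\<forall>f\<in>Arr C. Comp C f (Id C (Dom C f)) = f \<and> Comp C (Id C (Cod C f)) f = f) \<and>
     (\<forall>f\<in>Arr C. \<forall>g\<in>Arr C. \<forall>h\<in>Arr C. Cod C f = Dom C g \<and> Cod C g = Dom C h \<longrightarrow>
        Comp C h (Comp C g f) = Comp C (Comp C h g) f)"

definition hom :: "('o, 'a) cat \<Rightarrow> 'o \<Rightarrow> 'o \<Rightarrow> 'a set" where
  "hom C a b = {f \<in> Arr C. Dom C f = a \<and> Cod C f = b}"

definition monic :: "('o, 'a) cat \<Rightarrow> 'a \<Rightarrow> bool" where
  "monic C m \<longleftrightarrow> m \<in> Arr C \<and>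
     (\<forall>g\<in>Arr C. \<forall>h\<in>Arr C. Cod C g = Dom C m \<and> Cod C h = Dom C m \<and> Dom C g = Dom C h \<and>
        Comp C m g = Comp C m h \<longrightarrow> g = h)"

definition iso :: "('o, 'a) cat \<Rightarrow> 'a \<Rightarrow> bool" where
  "iso C f \<longleftrightarrow> f \<in> Arr C \<and>
     (\<exists>g\<in>hom C (Cod C f) (Dom C f). Comp C g f = Id C (Dom C f) \<and> Comp C f g = Id C (Cod C f))"

definition initial :: "('o, 'a) cat \<Rightarrow> 'o \<Rightarrow> bool" where
  "initial C z \<longleftrightarrow> z \<in> Obj C \<and> (\<forall>a\<in>Obj C. \<exists>!f. f \<in> hom C z a)"

definition terminal :: "('o, 'a) cat \<Rightarrow> 'o \<Rightarrow> bool" where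
  "terminal C z \<longleftrightarrow> z \<in> Obj C \<and> (\<forall>a\<in>Obj C. \<exists>!f. f \<in> hom C a z)"

definition zero_obj :: "('o, 'a) cat \<Rightarrow> 'o \<Rightarrow> bool" where
  "zero_obj C z \<longleftrightarrow> initial C z \<and> terminal C z"

definition pointed :: "('o, 'a) cat \<Rightarrow> bool" where
  "pointed C \<longleftrightarrow> (\<exists>z. zero_obj C z)"

definition zero_arrow :: "('o, 'a) cat \<Rightarrow> 'a \<Rightarrow> bool" where
  "zero_arrow C f \<longleftrightarrow> f \<in> Arr C \<and>
     (\<exists>z. zero_obj C z \<and> (\<exists>u\<in>hom C (Dom C f) z. \<exists>v\<in>hom C z (Cod C f). f = Comp C v u))"

definition is_kernel :: "('o, 'a) cat \<Rightarrow> 'a \<Rightarrow> 'a \<Rightarrow> bool" where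
  "is_kernel C k f \<longleftrightarrow> f \<in> Arr C \<and> k \<in> Arr C \<and> Cod C k = Dom C f \<and>
     zero_arrow C (Comp C f k) \<and>
     (\<forall>x\<in>Arr C. Cod C x = Dom C f \<and> zero_arrow C (Comp C f x) \<longrightarrow>
        (\<exists>!u. u \<in> hom C (Dom C x) (Dom C k) \<and> Comp C k u = x))"

definition normal_mono :: "('o, 'a) cat \<Rightarrow> 'a \<Rightarrow> bool" where
  "normal_mono C k \<longleftrightarrow> (\<exists>f. is_kernel C k f)"

definition is_pullback :: "('o, 'a) cat \<Rightarrow> 'a \<Rightarrow> 'a \<Rightarrow> 'a \<Rightarrow> 'a \<Rightarrow> bool" where
  "is_pullback C f g p q \<longleftrightarrow> f \<in> Arr C \<and> g \<in> Arr C \<and> p \<in> Arr C \<and> q \<in> Arr C \<and>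
     Cod C f = Cod C g \<and> Cod C p = Dom C f \<and> Cod C q = Dom C g \<and> Dom C p = Dom C q \<and>
     Comp C f p = Comp C g q \<and>
     (\<forall>x\<in>Arr C. \<forall>y\<in>Arr C. Dom C x = Dom C y \<and> Cod C x = Dom C f \<and> Cod C y = Dom C g \<and>
        Comp C f x = Comp C g y \<longrightarrow>
        (\<exists>!u. u \<in> hom C (Dom C x) (Dom C p) \<and> Comp C p u = x \<and> Comp C q u = y))"

definition finitely_complete :: "('o, 'a) cat \<Rightarrow> bool" where
  "finitely_complete C \<longleftrightarrow> (\<exists>t. terminal C t) \<and>
     (\<forall>f\<in>Arr C. \<forall>g\<in>Arr C. Cod C f = Cod C g \<longrightarrow> (\<exists>p q. is_pullback C f g p q))"

definition is_coequalizer :: "('o, 'a) cat \<Rightarrow> 'a \<Rightarrow> 'a \<Rightarrow> 'a \<Rightarrow> bool" where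
  "is_coequalizer C f g e \<longleftrightarrow> f \<in> Arr C \<and> g \<in> Arr C \<and> e \<in> Arr C \<and>
     Dom C f = Dom C g \<and> Cod C f = Cod C g \<and> Dom C e = Cod C f \<and>
     Comp C e f = Comp C e g \<and>
     (\<forall>h\<in>Arr C. Dom C h = Cod C f \<and> Comp C h f = Comp C h g \<longrightarrow>
        (\<exists>!u. u \<in> hom C (Cod C e) (Cod C h) \<and> Comp C u e = h))"

definition regular_epi :: "('o, 'a) cat \<Rightarrow> 'a \<Rightarrow> bool" where
  "regular_epi C e \<longleftrightarrow> (\<exists>f g. is_coequalizer C f g e)"

definition regular :: "('o, 'a) cat \<Rightarrow> bool" where
  "regular C \<longleftrightarrow> finitely_complete C \<and>
     (\<forall>f p q. is_pullback C f f p q \<longrightarrow> (\<exists>e. is_coequalizer C p q e)) \<and>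
     (\<forall>e g p q. regular_epi C e \<and> is_pullback C e g p q \<longrightarrow> regular_epi C q)"

text \<open>Membership of generalized elements in a relation (r1, r2) : R \<rightarrow> A x A.\<close>
definition rel_mem :: "('o, 'a) cat \<Rightarrow> 'a \<Rightarrow> 'a \<Rightarrow> 'a \<Rightarrow> 'a \<Rightarrow> bool" where
  "rel_mem C r1 r2 x y \<longleftrightarrow>
     (\<exists>u\<in>Arr C. Cod C u = Dom C r1 \<and> Comp C r1 u = x \<and> Comp C r2 u = y)"

definition equiv_rel :: "('o, 'a) cat \<Rightarrow> 'a \<Rightarrow> 'a \<Rightarrow> bool" where
  "equiv_rel C r1 r2 \<longleftrightarrow> r1 \<in> Arr C \<and> r2 \<in> Arr C \<and>
     Dom C r1 = Dom C r2 \<and> Cod C r1 = Cod C r2 \<and>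
     (\<forall>u\<in>Arr C. \<forall>v\<in>Arr C. Cod C u = Dom C r1 \<and> Cod C v = Dom C r1 \<and> Dom C u = Dom C v \<and>
        Comp C r1 u = Comp C r1 v \<and> Comp C r2 u = Comp C r2 v \<longrightarrow> u = v) \<and>
     (\<forall>x\<in>Arr C. Cod C x = Cod C r1 \<longrightarrow> rel_mem C r1 r2 x x) \<and>
     (\<forall>x y. rel_mem C r1 r2 x y \<longrightarrow> rel_mem C r1 r2 y x) \<and>
     (\<forall>x y z. rel_mem C r1 r2 x y \<and> rel_mem C r1 r2 y z \<longrightarrow> rel_mem C r1 r2 x z)"

definition exact :: "('o, 'a) cat \<Rightarrow> bool" where
  "exact C \<longleftrightarrow> regular C \<and>
     (\<forall>r1 r2. equiv_rel C r1 r2 \<longrightarrow> (\<exists>f. is_pullback C f f r1 r2))"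

definition split_ext :: "('o, 'a) cat \<Rightarrow> 'a \<Rightarrow> 'a \<Rightarrow> 'a \<Rightarrow> bool" where
  "split_ext C k p s \<longleftrightarrow> p \<in> Arr C \<and> s \<in> hom C (Cod C p) (Dom C p) \<and>
     Comp C p s = Id C (Cod C p) \<and> is_kernel C k p"

text \<open>Protomodularity (pointed, finitely complete case): split short five lemma.\<close>
definition protomodular :: "('o, 'a) cat \<Rightarrow> bool" where
  "protomodular C \<longleftrightarrow>
     (\<forall>k p s k' p' s' u v w.
        split_ext C k p s \<and> split_ext C k' p' s' \<and>
        u \<in> hom C (Dom C k) (Dom C k') \<and> v \<in> hom C (Dom C p) (Dom C p') \<and>
        w \<in> hom C (Cod C p) (Cod C p') \<and>
        Comp C v k = Comp C k' u \<and> Comp C p' v = Comp C w p \<and> Comp C v s = Comp C s' w \<and>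
        iso C u \<and> iso C w \<longrightarrow> iso C v)"

definition has_bin_coproducts :: "('o, 'a) cat \<Rightarrow> bool" where
  "has_bin_coproducts C \<longleftrightarrow>
     (\<forall>a\<in>Obj C. \<forall>b\<in>Obj C. \<exists>c i j. i \<in> hom C a c \<and> j \<in> hom C b c \<and>
        (\<forall>x\<in>Arr C. \<forall>y\<in>Arr C. Dom C x = a \<and> Dom C y = b \<and> Cod C x = Cod C y \<longrightarrow>
           (\<exists>!u. u \<in> hom C c (Cod C x) \<and> Comp C u i = x \<and> Comp C u j = y)))"

definition semi_abelian :: "('o, 'a) cat \<Rightarrow> bool" where
  "semi_abelian C \<longleftrightarrow> category C \<and> pointed C \<and> exact C \<and> protomodular C \<and>
     has_bin_coproducts C"

definition perp :: "('o, 'a) cat \<Rightarrow> 'a \<Rightarrow> 'a \<Rightarrow> bool" where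
  "perp C g m \<longleftrightarrow> Cod C g = Cod C m \<and>
     (\<forall>p q. is_pullback C g m p q \<longrightarrow> zero_obj C (Dom C p))"

definition essential_mono :: "('o, 'a) cat \<Rightarrow> 'a \<Rightarrow> bool" where
  "essential_mono C m \<longleftrightarrow> monic C m \<and>
     (\<forall>g\<in>Arr C. Dom C g = Cod C m \<and> monic C (Comp C g m) \<longrightarrow> monic C g)"

end

theory Submission
  imports Defs
begin

text \<open>Write the normal monic \<open>m\<close> as the kernel of some \<open>hm\<close>. Condition (1) implies (2)
  because normal monics are monic. If (3) holds and \<open>f \<cdot> m\<close> is monic, then the kernel of \<open>f\<close>
  meets \<open>m\<close> in zero, so it is zero, and in a protomodular category an arrow with zero kernel
  is monic; this gives (1). For (2) implies (3), let \<open>g\<close> be the kernel of \<open>hK\<close> with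
  \<open>g \<perp> m\<close>, so that \<open>(hm, hK)\<close> is jointly monic, and let \<open>e\<close> be the quotient by the kernel
  pair of \<open>hK\<close>. Then \<open>e \<cdot> m\<close> is monic, and it is normal: it is the kernel of the comparison
  map from the codomain of \<open>e\<close> to the quotient by the join of the kernel relations of \<open>hm\<close>
  and \<open>hK\<close>. That join is the composite of the two relations, since kernel relations permute
  in a protomodular category, and it is effective by exactness. Hence \<open>e\<close> is monic by (2),
  and \<open>g\<close>, which \<open>e\<close> identifies with zero, is zero.\<close>

locale semi_abelian_category =
  fixes C :: "('o, 'a) cat"
  assumes semi_abelian: "semi_abelian C"
begin

abbreviation ob where "ob a \<equiv> a \<in> Obj C"
abbreviation arr where "arr f \<equiv> f \<in> Arr C"
abbreviation src where "src f \<equiv> Dom C f"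
abbreviation trg where "trg f \<equiv> Cod C f"
abbreviation idn where "idn a \<equiv> Id C a"
abbreviation cmp :: "'a \<Rightarrow> 'a \<Rightarrow> 'a" (infixr "\<cdot>" 55) where "g \<cdot> f \<equiv> Comp C g f"

lemma category: "category C"
  using semi_abelian unfolding semi_abelian_def by simp

lemma ob_src [simp]: "arr f \<Longrightarrow> ob (src f)"
  and ob_trg [simp]: "arr f \<Longrightarrow> ob (trg f)"
  and arr_idn [simp]: "ob a \<Longrightarrow> arr (idn a)"
  and src_idn [simp]: "ob a \<Longrightarrow> src (idn a) = a"
  and trg_idn [simp]: "ob a \<Longrightarrow> trg (idn a) = a"
  and arr_cmp [simp]: "arr f \<Longrightarrow> arr g \<Longrightarrow> src g = trg f \<Longrightarrow> arr (g \<cdot> f)"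
  and src_cmp [simp]: "arr f \<Longrightarrow> arr g \<Longrightarrow> src g = trg f \<Longrightarrow> src (g \<cdot> f) = src f"
  and trg_cmp [simp]: "arr f \<Longrightarrow> arr g \<Longrightarrow> src g = trg f \<Longrightarrow> trg (g \<cdot> f) = trg g"
  and cmp_idn [simp]: "arr f \<Longrightarrow> src f = a \<Longrightarrow> f \<cdot> idn a = f"
  and idn_cmp [simp]: "arr f \<Longrightarrow> trg f = a \<Longrightarrow> idn a \<cdot> f = f"
  and cmp_assoc [simp]: "arr f \<Longrightarrow> arr g \<Longrightarrow> arr h \<Longrightarrow> src g = trg f \<Longrightarrow> src h = trg g \<Longrightarrow>
     (h \<cdot> g) \<cdot> f = h \<cdot> g \<cdot> f"
  using category unfolding category_def by auto

lemma hom_iff [simp]: "f \<in> hom C a b \<longleftrightarrow> arr f \<and> src f = a \<and> trg f = b"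
  unfolding hom_def by auto

lemma cmp_reassoc:
  "g \<cdot> f = h \<Longrightarrow> arr f \<Longrightarrow> arr g \<Longrightarrow> src g = trg f \<Longrightarrow> arr x \<Longrightarrow> trg x = src f \<Longrightarrow>
   g \<cdot> f \<cdot> x = h \<cdot> x"
  by (metis cmp_assoc)

lemma monicD:
  "monic C m \<Longrightarrow> arr x \<Longrightarrow> arr y \<Longrightarrow> trg x = src m \<Longrightarrow> trg y = src m \<Longrightarrow> src x = src y \<Longrightarrow>
   m \<cdot> x = m \<cdot> y \<Longrightarrow> x = y"
  unfolding monic_def by blast

lemma monic_cancel:
  assumes "monic C (g \<cdot> f)" and "arr f" "arr g" "src g = trg f"
  shows "monic C f"
  unfolding monic_def
proof (intro conjI ballI impI)
  fix x y assume "arr x" "arr y" "trg x = src f \<and> trg y = src f \<and> src x = src y \<and> f \<cdot> x = f \<cdot> y"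
  then show "x = y"
    using monicD[OF assms(1), of x y] assms(2-4) by (metis cmp_assoc src_cmp)
qed (use assms in simp)

subsection \<open>Zero object and zero arrows\<close>

definition zero_object :: 'o where
  "zero_object = (SOME z. zero_obj C z)"

lemma zero_obj_zero_object: "zero_obj C zero_object"
  unfolding zero_object_def using semi_abelian unfolding semi_abelian_def pointed_def
  by (metis someI_ex)

lemma ob_zero_object [simp]: "ob zero_object"
  using zero_obj_zero_object unfolding zero_obj_def initial_def by blast

definition to_zero :: "'o \<Rightarrow> 'a" where
  "to_zero a = (THE f. f \<in> hom C a zero_object)"

definition from_zero :: "'o \<Rightarrow> 'a" where
  "from_zero b = (THE f. f \<in> hom C zero_object b)"

lemma to_zero_hom: "ob a \<Longrightarrow> to_zero a \<in> hom C a zero_object"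
  unfolding to_zero_def
  by (rule theI') (use zero_obj_zero_object in \<open>auto simp: zero_obj_def terminal_def\<close>)

lemma from_zero_hom: "ob b \<Longrightarrow> from_zero b \<in> hom C zero_object b"
  unfolding from_zero_def
  by (rule theI') (use zero_obj_zero_object in \<open>auto simp: zero_obj_def initial_def\<close>)

lemma to_zero_unique: "arr f \<Longrightarrow> trg f = zero_object \<Longrightarrow> f = to_zero (src f)"
  using zero_obj_zero_object to_zero_hom[of "src f"]
  unfolding zero_obj_def terminal_def hom_iff by (metis ob_src)

lemma from_zero_unique: "arr f \<Longrightarrow> src f = zero_object \<Longrightarrow> f = from_zero (trg f)"
  using zero_obj_zero_object from_zero_hom[of "trg f"]
  unfolding zero_obj_def initial_def hom_iff by (metis ob_trg)

definition zero_map :: "'o \<Rightarrow> 'o \<Rightarrow> 'a" where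
  "zero_map a b = from_zero b \<cdot> to_zero a"

lemma zero_map_hom [simp]:
  "ob a \<Longrightarrow> ob b \<Longrightarrow> arr (zero_map a b)"
  "ob a \<Longrightarrow> ob b \<Longrightarrow> src (zero_map a b) = a"
  "ob a \<Longrightarrow> ob b \<Longrightarrow> trg (zero_map a b) = b"
  unfolding zero_map_def using to_zero_hom from_zero_hom by auto

lemma cmp_zero_map [simp]: "arr f \<Longrightarrow> src f = b \<Longrightarrow> ob a \<Longrightarrow> f \<cdot> zero_map a b = zero_map a (trg f)"
proof -
  assume f: "arr f" "src f = b" "ob a"
  have "f \<cdot> from_zero b = from_zero (trg f)"
    using f from_zero_hom[of b] from_zero_unique[of "f \<cdot> from_zero b"] by auto
  then show ?thesis
    unfolding zero_map_def using f to_zero_hom[of a] from_zero_hom[of b]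
    by (metis cmp_assoc hom_iff ob_src)
qed

lemma zero_map_cmp [simp]: "arr f \<Longrightarrow> trg f = b \<Longrightarrow> ob c \<Longrightarrow> zero_map b c \<cdot> f = zero_map (src f) c"
proof -
  assume f: "arr f" "trg f = b" "ob c"
  have "to_zero b \<cdot> f = to_zero (src f)"
    using f to_zero_hom[of b] to_zero_unique[of "to_zero b \<cdot> f"] by auto
  then show ?thesis
    unfolding zero_map_def using f to_zero_hom[of b] from_zero_hom[of c]
    by (metis cmp_assoc hom_iff ob_trg)
qed

lemma zero_map_monic: "ob a \<Longrightarrow> monic C (zero_map zero_object a)"
  unfolding monic_def
proof (intro conjI ballI impI)
  fix g h assume "ob a" "arr g" "arr h"
    "trg g = src (zero_map zero_object a) \<and> trg h = src (zero_map zero_object a) \<and> src g = src h \<and>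
     zero_map zero_object a \<cdot> g = zero_map zero_object a \<cdot> h"
  then show "g = h" using to_zero_unique[of g] to_zero_unique[of h] by simp
qed simp

lemma zero_obj_iff_idn_zero: "ob a \<Longrightarrow> zero_obj C a \<longleftrightarrow> idn a = zero_map a a"
proof
  assume "ob a" "zero_obj C a"
  then have "\<exists>!f. f \<in> hom C a a" unfolding zero_obj_def initial_def by blast
  moreover have "idn a \<in> hom C a a" "zero_map a a \<in> hom C a a" using \<open>ob a\<close> by simp_all
  ultimately show "idn a = zero_map a a" by blast
next
  assume a: "ob a" "idn a = zero_map a a"
  have from_a: "f \<in> hom C a b \<Longrightarrow> f = zero_map a b" for f b
  proof -
    assume f: "f \<in> hom C a b"
    have "f = f \<cdot> idn a" using f by simp
    also have "\<dots> = f \<cdot> zero_map a a" by (simp only: a(2))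
    finally show ?thesis using f a by simp
  qed
  have to_a: "f \<in> hom C b a \<Longrightarrow> f = zero_map b a" for f b
  proof -
    assume f: "f \<in> hom C b a"
    have "f = idn a \<cdot> f" using f by simp
    also have "\<dots> = zero_map a a \<cdot> f" by (simp only: a(2))
    finally show ?thesis using f a by simp
  qed
  show "zero_obj C a"
    unfolding zero_obj_def initial_def terminal_def
  proof (intro conjI ballI)
    fix b assume "ob b"
    show "\<exists>!f. f \<in> hom C a b"
      by (rule ex1I[of _ "zero_map a b"], use a \<open>ob b\<close> in simp, erule from_a)
    show "\<exists>!f. f \<in> hom C b a"
      by (rule ex1I[of _ "zero_map b a"], use a \<open>ob b\<close> in simp, erule to_a)
  qed (use a(1) in auto)
qed

lemma zero_arrow_iff: "zero_arrow C f \<longleftrightarrow> arr f \<and> f = zero_map (src f) (trg f)"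
proof
  assume "zero_arrow C f"
  then obtain z u v where f: "arr f" "zero_obj C z" and fe: "f = v \<cdot> u"
    and uv: "u \<in> hom C (src f) z" "v \<in> hom C z (trg f)"
    unfolding zero_arrow_def by blast
  from uv have u: "arr u" "src u = src f" "trg u = z" and v: "arr v" "src v = z" "trg v = trg f"
    by simp_all
  have "ob z" using u(1,3) ob_trg by blast
  then have z: "idn z = zero_map z z" using f(2) zero_obj_iff_idn_zero by blast
  have "f = v \<cdot> idn z \<cdot> u" using fe u v by simp
  also have "\<dots> = v \<cdot> zero_map z z \<cdot> u" by (simp only: z)
  also have "\<dots> = zero_map (src u) (trg v)" using u(1,3) v \<open>ob z\<close> by simp
  finally show "arr f \<and> f = zero_map (src f) (trg f)" using f(1) unfolding u(2) v(3) by blast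
next
  assume f: "arr f \<and> f = zero_map (src f) (trg f)"
  have "to_zero (src f) \<in> hom C (src f) zero_object" "from_zero (trg f) \<in> hom C zero_object (trg f)"
    using f to_zero_hom from_zero_hom by simp_all
  then show "zero_arrow C f"
    unfolding zero_arrow_def using f zero_obj_zero_object unfolding zero_map_def by blast
qed

lemma zero_arrow_zero_map: "ob a \<Longrightarrow> ob b \<Longrightarrow> zero_arrow C (zero_map a b)"
  unfolding zero_arrow_iff by simp

lemma zero_obj_map_zero:
  assumes "zero_obj C d" "arr p" "src p = d"
  shows "p = zero_map d (trg p)"
proof -
  have "ob d" using assms(2,3) ob_src by blast
  have "p = p \<cdot> idn d" using assms by simp
  also have "idn d = zero_map d d" using assms(1) \<open>ob d\<close> zero_obj_iff_idn_zero by blast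
  also have "p \<cdot> zero_map d d = zero_map d (trg p)" using assms(2,3) \<open>ob d\<close> by simp
  finally show ?thesis .
qed

subsection \<open>Pullbacks, products and coequalizers\<close>

lemma pullbackD:
  assumes "is_pullback C f g p q"
  shows "arr f" "arr g" "arr p" "arr q" "trg f = trg g" "trg p = src f" "trg q = src g"
    "src q = src p" "f \<cdot> p = g \<cdot> q"
  using assms unfolding is_pullback_def by auto

lemma pullback_factor:
  assumes "is_pullback C f g p q" "arr x" "arr y" "src y = src x" "trg x = src f" "trg y = src g"
    "f \<cdot> x = g \<cdot> y"
  obtains u where "arr u" "src u = src x" "trg u = src p" "p \<cdot> u = x" "q \<cdot> u = y"
  using assms unfolding is_pullback_def hom_iff by metis

lemma pullback_unique:
  assumes pb: "is_pullback C f g p q"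
    and "arr u" "arr v" "src v = src u" "trg u = src p" "trg v = src p"
    and "p \<cdot> u = p \<cdot> v" "q \<cdot> u = q \<cdot> v"
  shows "u = v"
proof -
  note P = pullbackD[OF pb]
  have "f \<cdot> p \<cdot> u = g \<cdot> q \<cdot> u" using P assms by (metis cmp_assoc)
  moreover have "arr (p \<cdot> u)" "arr (q \<cdot> u)" "src (q \<cdot> u) = src (p \<cdot> u)"
    "trg (p \<cdot> u) = src f" "trg (q \<cdot> u) = src g" using P assms by auto
  ultimately have "\<exists>!w. w \<in> hom C (src (p \<cdot> u)) (src p) \<and> p \<cdot> w = p \<cdot> u \<and> q \<cdot> w = q \<cdot> u"
    using pb unfolding is_pullback_def by metis
  then show ?thesis using assms P by auto
qed

lemma pullback_exists:
  assumes "arr f" "arr g" "trg f = trg g"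
  obtains p q where "is_pullback C f g p q"
  using assms semi_abelian
  unfolding semi_abelian_def exact_def regular_def finitely_complete_def by blast

lemma monic_pullback:
  assumes pb: "is_pullback C f g p q" and "monic C g"
  shows "monic C p"
  unfolding monic_def
proof (intro conjI ballI impI)
  note P = pullbackD[OF pb]
  fix u v assume uv: "arr u" "arr v" "trg u = src p \<and> trg v = src p \<and> src u = src v \<and> p \<cdot> u = p \<cdot> v"
  have "g \<cdot> q \<cdot> u = g \<cdot> q \<cdot> v"
    using P uv by (metis cmp_assoc)
  then have "q \<cdot> u = q \<cdot> v"
    using monicD[OF assms(2)] P uv by simp
  then show "u = v" using pullback_unique[OF pb] uv by auto
qed (use pullbackD[OF pb] in simp)

abbreviation is_product :: "'o \<Rightarrow> 'o \<Rightarrow> 'a \<Rightarrow> 'a \<Rightarrow> bool" where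
  "is_product X Y q1 q2 \<equiv> is_pullback C (zero_map X zero_object) (zero_map Y zero_object) q1 q2"

lemma product_exists:
  assumes "ob X" "ob Y"
  obtains q1 q2 where "is_product X Y q1 q2"
  using pullback_exists[of "zero_map X zero_object" "zero_map Y zero_object"] assms by auto

lemma product_pair:
  assumes "is_product X Y q1 q2" "ob X" "ob Y" "arr x" "arr y" "src y = src x" "trg x = X" "trg y = Y"
  obtains u where "arr u" "src u = src x" "trg u = src q1" "q1 \<cdot> u = x" "q2 \<cdot> u = y"
  using pullback_factor[OF assms(1), of x y] assms by auto

lemma coequalizerD:
  assumes "is_coequalizer C f g e"
  shows "arr f" "arr g" "arr e" "src g = src f" "trg f = trg g" "src e = trg f" "e \<cdot> f = e \<cdot> g"
  using assms unfolding is_coequalizer_def by auto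

lemma coequalizer_factor:
  assumes "is_coequalizer C f g e" "arr h" "src h = trg f" "h \<cdot> f = h \<cdot> g"
  obtains u where "arr u" "src u = trg e" "trg u = trg h" "u \<cdot> e = h"
  using assms unfolding is_coequalizer_def hom_iff by metis

lemma coequalizer_epi:
  assumes cq: "is_coequalizer C f g e"
    and "arr u" "arr v" "src u = trg e" "src v = trg e" "trg v = trg u" "u \<cdot> e = v \<cdot> e"
  shows "u = v"
proof -
  note E = coequalizerD[OF cq]
  have "(u \<cdot> e) \<cdot> f = (u \<cdot> e) \<cdot> g" using E assms by (metis cmp_assoc)
  moreover have "arr (u \<cdot> e)" "src (u \<cdot> e) = trg f" using E assms by auto
  ultimately have "\<exists>!w. w \<in> hom C (trg e) (trg (u \<cdot> e)) \<and> w \<cdot> e = u \<cdot> e"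
    using cq unfolding is_coequalizer_def by metis
  then show ?thesis using assms E by auto
qed

lemma kernel_pair_coequalizer:
  assumes "is_pullback C f f p q"
  obtains e where "is_coequalizer C p q e"
  using assms semi_abelian unfolding semi_abelian_def exact_def regular_def by blast

lemma regular_epi_pullback:
  "regular_epi C e \<Longrightarrow> is_pullback C e g p q \<Longrightarrow> regular_epi C q"
  using semi_abelian unfolding semi_abelian_def exact_def regular_def by blast

lemma equiv_rel_kernel_pair:
  assumes "equiv_rel C r1 r2"
  obtains f where "is_pullback C f f r1 r2"
  using assms semi_abelian unfolding semi_abelian_def exact_def by blast

lemma rel_memI: "arr u \<Longrightarrow> trg u = src r1 \<Longrightarrow> r1 \<cdot> u = x \<Longrightarrow> r2 \<cdot> u = y \<Longrightarrow> rel_mem C r1 r2 x y"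
  unfolding rel_mem_def by blast

lemma rel_memE:
  assumes "rel_mem C r1 r2 x y"
  obtains u where "arr u" "trg u = src r1" "r1 \<cdot> u = x" "r2 \<cdot> u = y"
  using assms unfolding rel_mem_def by blast

subsection \<open>Kernels\<close>

lemma is_kernelD:
  assumes "is_kernel C k f"
  shows "arr k" "arr f" "trg k = src f" "f \<cdot> k = zero_map (src k) (trg f)"
proof -
  have "arr k" "arr f" "trg k = src f" "zero_arrow C (f \<cdot> k)"
    using assms unfolding is_kernel_def by blast+
  then show "arr k" "arr f" "trg k = src f" "f \<cdot> k = zero_map (src k) (trg f)"
    unfolding zero_arrow_iff by simp_all
qed

lemma kernel_factor:
  assumes K: "is_kernel C k f" and x: "arr x" "trg x = src f" "f \<cdot> x = zero_map (src x) (trg f)"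
  obtains u where "arr u" "src u = src x" "trg u = src k" "k \<cdot> u = x"
proof -
  have "zero_arrow C (f \<cdot> x)"
    unfolding x(3) using x(1) is_kernelD(2)[OF K] by (intro zero_arrow_zero_map) simp_all
  then have "\<exists>!u. u \<in> hom C (src x) (src k) \<and> k \<cdot> u = x"
    using K x(1,2) unfolding is_kernel_def by blast
  then obtain u where "u \<in> hom C (src x) (src k)" "k \<cdot> u = x" by blast
  then show ?thesis by (intro that) simp_all
qed

lemma kernel_monic:
  assumes K: "is_kernel C k f"
  shows "monic C k"
  unfolding monic_def
proof (intro conjI ballI impI)
  note k = is_kernelD[OF K]
  show "arr k" by (fact k(1))
  fix g h assume "arr g" "arr h" "trg g = src k \<and> trg h = src k \<and> src g = src h \<and> k \<cdot> g = k \<cdot> h"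
  then have g: "arr g" "trg g = src k" and h: "arr h" "trg h = src k" "src h = src g"
    and kh: "k \<cdot> h = k \<cdot> g" by simp_all
  have kg: "arr (k \<cdot> g)" "src (k \<cdot> g) = src g" "trg (k \<cdot> g) = src f" using k g by simp_all
  have "f \<cdot> k \<cdot> g = zero_map (src g) (trg f)"
    using cmp_reassoc[OF k(4)] k g by simp
  then have "zero_arrow C (f \<cdot> k \<cdot> g)"
    using k(2) g(1) zero_arrow_zero_map by simp
  then have "\<exists>!u. u \<in> hom C (src (k \<cdot> g)) (src k) \<and> k \<cdot> u = k \<cdot> g"
    using K kg unfolding is_kernel_def by blast
  moreover have "g \<in> hom C (src (k \<cdot> g)) (src k)" "h \<in> hom C (src (k \<cdot> g)) (src k)"
    using g h kg by simp_all
  ultimately show "g = h" using kh by blast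
qed

lemma is_kernelI:
  assumes "arr k" "arr f" "trg k = src f" "f \<cdot> k = zero_map (src k) (trg f)" "monic C k"
    and factor: "\<And>x. arr x \<Longrightarrow> trg x = src f \<Longrightarrow> f \<cdot> x = zero_map (src x) (trg f) \<Longrightarrow>
      \<exists>u. arr u \<and> src u = src x \<and> trg u = src k \<and> k \<cdot> u = x"
  shows "is_kernel C k f"
  unfolding is_kernel_def
proof (intro conjI ballI impI)
  show "zero_arrow C (f \<cdot> k)" using assms zero_arrow_iff by simp
  fix x assume x: "arr x" "trg x = src f \<and> zero_arrow C (f \<cdot> x)"
  then have "f \<cdot> x = zero_map (src (f \<cdot> x)) (trg (f \<cdot> x))"
    unfolding zero_arrow_iff by blast
  also have "\<dots> = zero_map (src x) (trg f)" using x assms(2) by simp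
  finally have "f \<cdot> x = zero_map (src x) (trg f)" .
  then obtain u where u: "arr u" "src u = src x" "trg u = src k" "k \<cdot> u = x"
    using factor x by blast
  show "\<exists>!u. u \<in> hom C (src x) (src k) \<and> k \<cdot> u = x"
    by (rule ex1I[of _ u]) (use u monicD[OF assms(5)] in auto)
qed (use assms in auto)

lemma zero_is_kernel:
  assumes "arr f"
    and "\<And>x. arr x \<Longrightarrow> trg x = src f \<Longrightarrow> f \<cdot> x = zero_map (src x) (trg f) \<Longrightarrow>
      x = zero_map (src x) (src f)"
  shows "is_kernel C (zero_map zero_object (src f)) f"
proof (rule is_kernelI)
  fix x assume "arr x" "trg x = src f" "f \<cdot> x = zero_map (src x) (trg f)"
  then show "\<exists>u. arr u \<and> src u = src x \<and> trg u = src (zero_map zero_object (src f)) \<and>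
      zero_map zero_object (src f) \<cdot> u = x"
    using assms to_zero_hom[of "src x"] by (intro exI[of _ "to_zero (src x)"]) auto
qed (use assms zero_map_monic in auto)

lemma kernel_exists:
  assumes f: "arr f"
  obtains k where "is_kernel C k f"
proof -
  obtain k q where pb: "is_pullback C f (zero_map zero_object (trg f)) k q"
    using pullback_exists[of f "zero_map zero_object (trg f)"] f by auto
  note P = pullbackD[OF pb]
  have "is_kernel C k f"
  proof (rule is_kernelI)
    show "f \<cdot> k = zero_map (src k) (trg f)" using P f by simp
    show "monic C k"
      by (rule monic_pullback[OF pb zero_map_monic]) (use f in simp)
    fix x assume x: "arr x" "trg x = src f" "f \<cdot> x = zero_map (src x) (trg f)"
    have t: "arr (to_zero (src x))" "src (to_zero (src x)) = src x" "trg (to_zero (src x)) = zero_object"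
      using to_zero_hom[of "src x"] x(1) by simp_all
    have "f \<cdot> x = zero_map zero_object (trg f) \<cdot> to_zero (src x)"
      using x(3) t f by simp
    moreover have "src (zero_map zero_object (trg f)) = zero_object" using f by simp
    ultimately obtain u where "arr u" "src u = src x" "trg u = src k" "k \<cdot> u = x"
      using pullback_factor[OF pb x(1) t(1,2) x(2)] t(3) by metis
    then show "\<exists>u. arr u \<and> src u = src x \<and> trg u = src k \<and> k \<cdot> u = x" by blast
  qed (use P f in simp_all)
  then show ?thesis by (rule that)
qed

lemma normal_mono_monic: "normal_mono C m \<Longrightarrow> monic C m"
  unfolding normal_mono_def using kernel_monic by blast

lemma iso_idn: "ob a \<Longrightarrow> iso C (idn a)"
  unfolding iso_def by (intro conjI bexI[of _ "idn a"]) auto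

lemma iso_inverse:
  assumes "iso C v"
  obtains w where "arr w" "src w = trg v" "trg w = src v" "w \<cdot> v = idn (src v)" "v \<cdot> w = idn (trg v)"
  using assms unfolding iso_def by auto

lemma split_short_five:
  assumes "split_ext C k p s" "split_ext C k' p' s'"
    and "u \<in> hom C (src k) (src k')" "v \<in> hom C (src p) (src p')" "w \<in> hom C (trg p) (trg p')"
    and "v \<cdot> k = k' \<cdot> u" "p' \<cdot> v = w \<cdot> p" "v \<cdot> s = s' \<cdot> w" "iso C u" "iso C w"
  shows "iso C v"
  using semi_abelian assms unfolding semi_abelian_def protomodular_def by blast

subsection \<open>Consequences of protomodularity\<close>

lemma left_inverses_eq:
  assumes "arr r1" "arr r2" "arr d" "arr d'" "src r1 = trg d" "src r2 = trg d" "trg d' = src d"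
    and "r1 \<cdot> d = idn (src d)" "r2 \<cdot> d = idn (src d)" "d \<cdot> d' = idn (trg d)"
  shows "r1 = r2"
proof -
  have "(r1 \<cdot> d) \<cdot> d' = r1 \<cdot> (d \<cdot> d')" "(r2 \<cdot> d) \<cdot> d' = r2 \<cdot> (d \<cdot> d')"
    using assms(1-7) by simp_all
  then show ?thesis using assms by simp
qed

lemma split_ext_zero_kernel_iso:
  assumes se: "split_ext C (zero_map zero_object (src p)) p s"
  shows "iso C s"
proof -
  define A where "A = trg p"
  have p: "arr p" "arr s" "src s = A" "trg s = src p" "p \<cdot> s = idn A" "ob A"
    using se unfolding split_ext_def A_def by auto
  have "is_kernel C (zero_map zero_object A) (idn A)"
    using zero_is_kernel[of "idn A"] p by simp
  then have "split_ext C (zero_map zero_object A) (idn A) (idn A)"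
    unfolding split_ext_def using p by simp
  then show ?thesis
    by (rule split_short_five[where u = "idn zero_object" and w = "idn A", OF _ se])
      (use p iso_idn A_def in simp_all)
qed

text \<open>The diagonal of the kernel pair \<open>(r1, r2)\<close> of \<open>f\<close> is a section of \<open>r1\<close> with zero kernel,
  hence invertible by the short five lemma; so \<open>r1 = r2\<close>.\<close>

lemma monic_if_trivial_kernel:
  assumes f: "arr f"
    and trivial_kernel: "\<And>x. arr x \<Longrightarrow> trg x = src f \<Longrightarrow> f \<cdot> x = zero_map (src x) (trg f) \<Longrightarrow>
      x = zero_map (src x) (src f)"
  shows "monic C f"
proof -
  obtain r1 r2 where pb: "is_pullback C f f r1 r2" using pullback_exists f by blast
  note P = pullbackD[OF pb]
  obtain d where d: "arr d" "src d = src f" "trg d = src r1" "r1 \<cdot> d = idn (src f)" "r2 \<cdot> d = idn (src f)"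
    using pullback_factor[OF pb, of "idn (src f)" "idn (src f)"] f by auto
  have "is_kernel C (zero_map zero_object (src r1)) r1"
  proof (rule zero_is_kernel)
    fix x assume x: "arr x" "trg x = src r1" "r1 \<cdot> x = zero_map (src x) (trg r1)"
    have "f \<cdot> r2 \<cdot> x = f \<cdot> r1 \<cdot> x" using P x by (metis cmp_assoc)
    also have "\<dots> = zero_map (src x) (trg f)" using x P f by simp
    finally have "r2 \<cdot> x = zero_map (src x) (trg r1)" using trivial_kernel[of "r2 \<cdot> x"] P x by simp
    then show "x = zero_map (src x) (src r1)"
      using pullback_unique[OF pb, of x "zero_map (src x) (src r1)"] x P by simp
  qed (rule P)
  then have "iso C d"
    using split_ext_zero_kernel_iso[of r1 d] d P unfolding split_ext_def by simp
  then obtain d' where d': "arr d'" "trg d' = src d" "d \<cdot> d' = idn (trg d)"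
    by (rule iso_inverse) simp
  have "r1 = r2" by (rule left_inverses_eq[of r1 r2 d d']) (use P d d' in simp_all)
  show ?thesis
    unfolding monic_def
  proof (intro conjI ballI impI)
    fix x y assume "arr x" "arr y" "trg x = src f \<and> trg y = src f \<and> src x = src y \<and> f \<cdot> x = f \<cdot> y"
    then obtain u where "r1 \<cdot> u = x" "r2 \<cdot> u = y"
      using pullback_factor[OF pb, of x y] by metis
    then show "x = y" using \<open>r1 = r2\<close> by simp
  qed (rule f)
qed

lemma kernel_pullback_along_monic:
  assumes K: "is_kernel C k p" and n: "monic C n" "trg n = src p"
    and k': "arr k'" "trg k' = src n" "n \<cdot> k' = k"
  shows "is_kernel C k' (p \<cdot> n)"
proof -
  note k = is_kernelD[OF K]
  have n_arr: "arr n" using n unfolding monic_def by simp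
  have src_k: "src k = src k'" using k'(1,2,3) n_arr by (metis src_cmp)
  show ?thesis
  proof (rule is_kernelI)
    show "(p \<cdot> n) \<cdot> k' = zero_map (src k') (trg (p \<cdot> n))"
      using k k' n n_arr by (metis cmp_assoc src_cmp trg_cmp)
    show "monic C k'"
      by (rule monic_cancel[of n]) (use kernel_monic[OF K] k' n_arr in simp_all)
    fix x assume x: "arr x" "trg x = src (p \<cdot> n)" "(p \<cdot> n) \<cdot> x = zero_map (src x) (trg (p \<cdot> n))"
    then have "p \<cdot> n \<cdot> x = zero_map (src (n \<cdot> x)) (trg p)"
      using k n n_arr by simp
    then obtain u where u: "arr u" "src u = src x" "trg u = src k" "k \<cdot> u = n \<cdot> x"
      using kernel_factor[OF K, of "n \<cdot> x"] x n n_arr k by auto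
    have "n \<cdot> k' \<cdot> u = n \<cdot> x"
      using cmp_reassoc[OF k'(3)] u k' n_arr src_k by simp
    then have "k' \<cdot> u = x"
      using monicD[OF n(1), of "k' \<cdot> u" x] u k' x n n_arr k src_k by simp
    then show "\<exists>u. arr u \<and> src u = src x \<and> trg u = src k' \<and> k' \<cdot> u = x"
      using u k' k n_arr by auto
  qed (use k k' n n_arr in simp_all)
qed

text \<open>Pulling \<open>G\<close> back along \<open>F\<close> gives a monic comparison of split extensions, which is
  invertible by the short five lemma.\<close>

lemma split_ext_factor_through_monic:
  assumes se: "split_ext C k p s" and G: "monic C G" and F: "arr F" "src F = src p" "trg F = trg G"
    and x1: "arr x1" "trg x1 = src G" "F \<cdot> k = G \<cdot> x1"
    and x2: "arr x2" "trg x2 = src G" "F \<cdot> s = G \<cdot> x2"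
  obtains y where "arr y" "src y = src p" "trg y = src G" "F = G \<cdot> y"
proof -
  have p[simp]: "arr p" "arr s" "src s = trg p" "trg s = src p" and ps: "p \<cdot> s = idn (trg p)"
    and K: "is_kernel C k p"
    using se unfolding split_ext_def by auto
  note k[simp] = is_kernelD(1-3)[OF K]
  have [simp]: "arr G" using G unfolding monic_def by simp
  obtain n g where pb: "is_pullback C F G n g" using pullback_exists[of F G] F by auto
  note P[simp] = pullbackD(3,4,6,7,8)[OF pb]
  have Fn: "F \<cdot> n = G \<cdot> g" using pullbackD[OF pb] by simp
  have n: "monic C n" by (rule monic_pullback[OF pb G])
  have "src (G \<cdot> x1) = src (F \<cdot> k)" "src (G \<cdot> x2) = src (F \<cdot> s)" by (simp_all only: x1(3) x2(3))
  then have src_k: "src x1 = src k" and src_s: "src x2 = trg p"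
    using x1(1,2) x2(1,2) F by simp_all
  obtain k' where k': "arr k'" "trg k' = src n" "n \<cdot> k' = k" "src k' = src k"
    using pullback_factor[OF pb, of k x1] x1 F src_k by auto
  obtain s' where s': "arr s'" "trg s' = src n" "n \<cdot> s' = s" "src s' = trg p"
    using pullback_factor[OF pb, of s x2] x2 F src_s by auto
  have "split_ext C k' (p \<cdot> n) s'"
    unfolding split_ext_def
  proof (intro conjI)
    show "is_kernel C k' (p \<cdot> n)"
      by (rule kernel_pullback_along_monic[OF K n _ k'(1-3)]) (use F in simp)
    have "(p \<cdot> n) \<cdot> s' = p \<cdot> n \<cdot> s'" using s' F by simp
    also have "\<dots> = idn (trg (p \<cdot> n))" using s'(3) ps F by simp
    finally show "(p \<cdot> n) \<cdot> s' = idn (trg (p \<cdot> n))" .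
  qed (use s' F in simp_all)
  then have "iso C n"
    by (rule split_short_five[where u = "idn (src k)" and w = "idn (trg p)", OF _ se])
      (use k' s' F iso_idn in simp_all)
  then obtain n' where n': "arr n'" "trg n' = src n" "n \<cdot> n' = idn (trg n)"
    by (rule iso_inverse) simp
  have "F = F \<cdot> n \<cdot> n'" using n' F by simp
  also have "\<dots> = (G \<cdot> g) \<cdot> n'" by (rule cmp_reassoc[OF Fn]) (use n' F in simp_all)
  also have "\<dots> = G \<cdot> g \<cdot> n'" using n' by simp
  finally show ?thesis
    by (intro that[of "g \<cdot> n'"]) (use n' F in simp_all)
qed

subsection \<open>Jointly monic pairs\<close>

definition jointly_monic :: "'a \<Rightarrow> 'a \<Rightarrow> bool" where
  "jointly_monic h1 h2 \<longleftrightarrow> arr h1 \<and> arr h2 \<and> src h2 = src h1 \<and>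
     (\<forall>x y. arr x \<and> arr y \<and> trg x = src h1 \<and> trg y = src h1 \<and> src y = src x \<and>
        h1 \<cdot> x = h1 \<cdot> y \<and> h2 \<cdot> x = h2 \<cdot> y \<longrightarrow> x = y)"

lemma jointly_monicD:
  "jointly_monic h1 h2 \<Longrightarrow> arr x \<Longrightarrow> arr y \<Longrightarrow> trg x = src h1 \<Longrightarrow> trg y = src h1 \<Longrightarrow>
   src y = src x \<Longrightarrow> h1 \<cdot> x = h1 \<cdot> y \<Longrightarrow> h2 \<cdot> x = h2 \<cdot> y \<Longrightarrow> x = y"
  unfolding jointly_monic_def by blast

lemma jointly_monic_commute:
  assumes jm: "jointly_monic h1 h2"
  shows "jointly_monic h2 h1"
proof -
  have h: "arr h1" "arr h2" "src h2 = src h1" using jm unfolding jointly_monic_def by blast+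
  show ?thesis
    unfolding jointly_monic_def
  proof (intro conjI allI impI)
    fix x y assume "arr x \<and> arr y \<and> trg x = src h2 \<and> trg y = src h2 \<and> src y = src x \<and>
      h2 \<cdot> x = h2 \<cdot> y \<and> h1 \<cdot> x = h1 \<cdot> y"
    then show "x = y" using jointly_monicD[OF jm, of x y] h by simp
  qed (use h in simp_all)
qed

lemma product_pair_eq_iff:
  assumes pr: "is_product X Y q1 q2" "ob X" "ob Y"
    and G: "arr G" "trg G = src q1" "q1 \<cdot> G = h1" "q2 \<cdot> G = h2"
    and xy: "arr x" "arr y" "trg x = src G" "trg y = src G" "src y = src x"
  shows "G \<cdot> x = G \<cdot> y \<longleftrightarrow> h1 \<cdot> x = h1 \<cdot> y \<and> h2 \<cdot> x = h2 \<cdot> y"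
proof
  note P = pullbackD[OF pr(1)]
  assume "G \<cdot> x = G \<cdot> y"
  then have "q1 \<cdot> G \<cdot> x = q1 \<cdot> G \<cdot> y" "q2 \<cdot> G \<cdot> x = q2 \<cdot> G \<cdot> y" by simp_all
  then show "h1 \<cdot> x = h1 \<cdot> y \<and> h2 \<cdot> x = h2 \<cdot> y"
    using cmp_reassoc[OF G(3)] cmp_reassoc[OF G(4)] xy G P by simp
next
  note P = pullbackD[OF pr(1)]
  assume "h1 \<cdot> x = h1 \<cdot> y \<and> h2 \<cdot> x = h2 \<cdot> y"
  then show "G \<cdot> x = G \<cdot> y"
    using pullback_unique[OF pr(1), of "G \<cdot> x" "G \<cdot> y"] xy G P cmp_reassoc[OF G(3)]
      cmp_reassoc[OF G(4)] by simp
qed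

lemma monic_iff_jointly_monic:
  assumes pr: "is_product X Y q1 q2" "ob X" "ob Y"
    and G: "arr G" "trg G = src q1" "q1 \<cdot> G = h1" "q2 \<cdot> G = h2"
  shows "monic C G \<longleftrightarrow> jointly_monic h1 h2"
proof -
  note P = pullbackD[OF pr(1)]
  note components = product_pair_eq_iff[OF pr G]
  have "arr (q1 \<cdot> G)" "arr (q2 \<cdot> G)" "src (q1 \<cdot> G) = src G" "src (q2 \<cdot> G) = src G"
    using G(1,2) P pr by simp_all
  then have h: "arr h1" "arr h2" "src h1 = src G" "src h2 = src G"
    unfolding G(3,4) .
  show ?thesis
  proof
    assume G_monic: "monic C G"
    show "jointly_monic h1 h2"
      unfolding jointly_monic_def
    proof (intro conjI allI impI)
      fix x y
      assume xy: "arr x \<and> arr y \<and> trg x = src h1 \<and> trg y = src h1 \<and> src y = src x \<and>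
        h1 \<cdot> x = h1 \<cdot> y \<and> h2 \<cdot> x = h2 \<cdot> y"
      show "x = y"
        by (rule monicD[OF G_monic]) (use xy components[of x y] h in simp_all)
    qed (use h in simp_all)
  next
    assume jm: "jointly_monic h1 h2"
    show "monic C G"
      unfolding monic_def
    proof (intro conjI ballI impI)
      fix x y
      assume xy: "arr x" "arr y" "trg x = src G \<and> trg y = src G \<and> src x = src y \<and> G \<cdot> x = G \<cdot> y"
      show "x = y"
        by (rule jointly_monicD[OF jm]) (use xy components[of x y] h in simp_all)
    qed (rule G(1))
  qed
qed

text \<open>The pullback of \<open>i2\<close> and \<open>k1\<close> is the composite relation \<open>x \<sim>\<^sub>1 b \<sim>\<^sub>2 y\<close>
  of the kernel pairs \<open>(i1, i2)\<close> of \<open>h1\<close> and \<open>(k1, k2)\<close> of \<open>h2\<close>; the pair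
  \<open>(i1 \<cdot> pI, k2 \<cdot> pK)\<close> relates \<open>x\<close> to \<open>y\<close>.\<close>

context
  fixes h1 h2 i1 i2 k1 k2 pI pK
  assumes kp1: "is_pullback C h1 h1 i1 i2" and kp2: "is_pullback C h2 h2 k1 k2"
    and pb: "is_pullback C i2 k1 pI pK"
begin

lemma composite_rel_arrows:
  shows "arr h1" "arr h2" "arr i1" "arr i2" "arr k1" "arr k2" "arr pI" "arr pK"
    and "src h2 = src h1" "trg i1 = src h1" "trg i2 = src h1" "trg k1 = src h1" "trg k2 = src h1"
    and "src i2 = src i1" "src k2 = src k1" "trg pI = src i1" "trg pK = src k1" "src pK = src pI"
    and "h1 \<cdot> i2 = h1 \<cdot> i1" "h2 \<cdot> k2 = h2 \<cdot> k1" "k1 \<cdot> pK = i2 \<cdot> pI"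
  using pullbackD[OF kp1] pullbackD[OF kp2] pullbackD[OF pb] by auto

lemma composite_rel_memI:
  assumes x: "arr x" "trg x = src h1" and y: "arr y" "trg y = src h1" "src y = src x"
    and b: "arr b" "trg b = src h1" "src b = src x" and "h1 \<cdot> x = h1 \<cdot> b" "h2 \<cdot> b = h2 \<cdot> y"
  shows "rel_mem C (i1 \<cdot> pI) (k2 \<cdot> pK) x y"
proof -
  note A = composite_rel_arrows
  obtain u1 where u1: "arr u1" "src u1 = src x" "trg u1 = src i1" "i1 \<cdot> u1 = x" "i2 \<cdot> u1 = b"
    by (rule pullback_factor[OF kp1 x(1) b(1) b(3) x(2) b(2) assms(9)])
  have "src y = src b" "trg b = src h2" "trg y = src h2" using y b A by simp_all
  then obtain u2 where u2: "arr u2" "src u2 = src b" "trg u2 = src k1" "k1 \<cdot> u2 = b" "k2 \<cdot> u2 = y"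
    using pullback_factor[OF kp2 b(1) y(1)] assms(10) by blast
  have "src u2 = src u1" "trg u1 = src i2" "trg u2 = src k1" "i2 \<cdot> u1 = k1 \<cdot> u2"
    using u1 u2 b A by simp_all
  then obtain w where w: "arr w" "src w = src u1" "trg w = src pI" "pI \<cdot> w = u1" "pK \<cdot> w = u2"
    using pullback_factor[OF pb u1(1) u2(1)] by blast
  show ?thesis
    by (rule rel_memI[of w]) (use w u1 u2 A in simp_all)
qed

lemma composite_rel_memD:
  assumes "rel_mem C (i1 \<cdot> pI) (k2 \<cdot> pK) x y"
  obtains b where "arr x" "arr y" "trg x = src h1" "trg y = src h1" "src y = src x"
    "arr b" "src b = src x" "trg b = src h1" "h1 \<cdot> x = h1 \<cdot> b" "h2 \<cdot> b = h2 \<cdot> y"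
proof -
  note A = composite_rel_arrows
  from assms obtain u where u: "arr u" "trg u = src (i1 \<cdot> pI)" "(i1 \<cdot> pI) \<cdot> u = x" "(k2 \<cdot> pK) \<cdot> u = y"
    by (rule rel_memE)
  then have u': "trg u = src pI" "x = i1 \<cdot> pI \<cdot> u" "y = k2 \<cdot> pK \<cdot> u"
    using A by simp_all
  show ?thesis
    by (rule that[of "i2 \<cdot> pI \<cdot> u"])
      (use u(1) u' A cmp_reassoc[OF A(19)] cmp_reassoc[OF A(20)] cmp_reassoc[OF A(21)] in simp_all)
qed

lemma composite_rel_section:
  obtains s where "arr s" "src s = src i1" "trg s = src pI" "pI \<cdot> s = idn (src i1)" "k2 \<cdot> pK \<cdot> s = i2"
proof -
  note A = composite_rel_arrows
  obtain d where d: "arr d" "src d = src h1" "trg d = src k1" "k1 \<cdot> d = idn (src h1)" "k2 \<cdot> d = idn (src h1)"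
    using pullback_factor[OF kp2, of "idn (src h1)" "idn (src h1)"] A by auto
  have "i2 \<cdot> idn (src i1) = k1 \<cdot> d \<cdot> i2" using cmp_reassoc[OF d(4)] d A by simp
  then obtain s where s: "arr s" "src s = src i1" "trg s = src pI" "pI \<cdot> s = idn (src i1)" "pK \<cdot> s = d \<cdot> i2"
    using pullback_factor[OF pb, of "idn (src i1)" "d \<cdot> i2"] d A by auto
  have "k2 \<cdot> pK \<cdot> s = k2 \<cdot> d \<cdot> i2" by (simp only: s(5))
  also have "\<dots> = i2" using d A cmp_reassoc[OF d(5)] by simp
  finally have "k2 \<cdot> pK \<cdot> s = i2" .
  with s(1-4) show ?thesis by (rule that)
qed

text \<open>The arrow \<open>y\<close> is a Mal'tsev operation on the composite relation: the pair
  \<open>\<langle>h2 \<cdot> i1 \<cdot> pI, h1 \<cdot> k2 \<cdot> pK\<rangle>\<close> lifts through the monic \<open>\<langle>h2, h1\<rangle>\<close> because it does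
  so on the kernel of \<open>pI\<close> and along its section.\<close>

lemma maltsev_operation:
  assumes jm: "jointly_monic h2 h1"
  obtains y where "arr y" "src y = src pI" "trg y = src h1"
    "h2 \<cdot> y = h2 \<cdot> i1 \<cdot> pI" "h1 \<cdot> y = h1 \<cdot> k2 \<cdot> pK"
proof -
  note A = composite_rel_arrows
  note reassoc = cmp_reassoc[OF A(19)] cmp_reassoc[OF A(20)] cmp_reassoc[OF A(21)]
  obtain s where s: "arr s" "src s = src i1" "trg s = src pI" "pI \<cdot> s = idn (src i1)" "k2 \<cdot> pK \<cdot> s = i2"
    by (rule composite_rel_section)
  obtain k where K: "is_kernel C k pI" using kernel_exists A(7) by blast
  note k = is_kernelD[OF K]
  have se: "split_ext C k pI s" unfolding split_ext_def using K s A by simp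
  have ob: "ob (trg h2)" "ob (trg h1)" using A by simp_all
  obtain q1 q2 where pr: "is_product (trg h2) (trg h1) q1 q2" using product_exists[OF ob] .
  note Q = pullbackD[OF pr]
  obtain G where G: "arr G" "src G = src h1" "trg G = src q1" "q1 \<cdot> G = h2" "q2 \<cdot> G = h1"
    using product_pair[OF pr ob, of h2 h1] A by auto
  have G_monic: "monic C G" using monic_iff_jointly_monic[OF pr ob G(1,3,4,5)] jm by simp
  obtain F where F: "arr F" "src F = src pI" "trg F = src q1"
      "q1 \<cdot> F = h2 \<cdot> i1 \<cdot> pI" "q2 \<cdot> F = h1 \<cdot> k2 \<cdot> pK"
    using product_pair[OF pr ob, of "h2 \<cdot> i1 \<cdot> pI" "h1 \<cdot> k2 \<cdot> pK"] A by auto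
  note components = cmp_reassoc[OF G(4)] cmp_reassoc[OF G(5)] cmp_reassoc[OF F(4)] cmp_reassoc[OF F(5)]
  have on_kernel: "F \<cdot> k = G \<cdot> k2 \<cdot> pK \<cdot> k"
    by (rule pullback_unique[OF pr]) (use A k G F Q components reassoc in simp_all)
  have on_section: "F \<cdot> s = G \<cdot> i1"
    by (rule pullback_unique[OF pr]) (use A s G F Q components reassoc in simp_all)
  obtain y where y: "arr y" "src y = src pI" "trg y = src G" "F = G \<cdot> y"
    by (rule split_ext_factor_through_monic[OF se G_monic F(1,2)])
      (use A k s G F on_kernel on_section in simp_all)
  have "q1 \<cdot> G \<cdot> y = q1 \<cdot> F" "q2 \<cdot> G \<cdot> y = q2 \<cdot> F" using y(4) by simp_all
  then have "h2 \<cdot> y = h2 \<cdot> i1 \<cdot> pI" "h1 \<cdot> y = h1 \<cdot> k2 \<cdot> pK"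
    using cmp_reassoc[OF G(4)] cmp_reassoc[OF G(5)] y(1,3) G(1,2,3) F(4,5) Q by simp_all
  moreover have "trg y = src h1" using y(3) G(2) by simp
  ultimately show ?thesis using y(1,2) by (intro that)
qed

end

lemma kernel_relations_permute:
  assumes jm: "jointly_monic h1 h2"
    and a: "arr a" "trg a = src h1" and b: "arr b" "trg b = src h1" "src b = src a"
    and c: "arr c" "trg c = src h1" "src c = src a"
    and "h1 \<cdot> a = h1 \<cdot> b" "h2 \<cdot> b = h2 \<cdot> c"
  obtains b' where "arr b'" "src b' = src a" "trg b' = src h1" "h2 \<cdot> a = h2 \<cdot> b'" "h1 \<cdot> b' = h1 \<cdot> c"
proof -
  have h: "arr h1" "arr h2" "src h2 = src h1" using jm unfolding jointly_monic_def by blast+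
  obtain i1 i2 where kp1: "is_pullback C h1 h1 i1 i2" using pullback_exists h by blast
  obtain k1 k2 where kp2: "is_pullback C h2 h2 k1 k2" using pullback_exists h by blast
  have "arr i2" "arr k1" "trg i2 = trg k1" using pullbackD[OF kp1] pullbackD[OF kp2] h by simp_all
  then obtain pI pK where pb: "is_pullback C i2 k1 pI pK" using pullback_exists by blast
  note A = composite_rel_arrows[OF kp1 kp2 pb]
  have "rel_mem C (i1 \<cdot> pI) (k2 \<cdot> pK) a c"
    using composite_rel_memI[OF kp1 kp2 pb a c(1,2,3) b] assms(10,11) by simp
  then obtain u where "arr u" "trg u = src (i1 \<cdot> pI)" "(i1 \<cdot> pI) \<cdot> u = a" "(k2 \<cdot> pK) \<cdot> u = c"
    by (rule rel_memE)
  then have u: "arr u" "trg u = src pI" "a = i1 \<cdot> pI \<cdot> u" "c = k2 \<cdot> pK \<cdot> u"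
    using A by simp_all
  obtain y where y: "arr y" "src y = src pI" "trg y = src h1"
      "h2 \<cdot> y = h2 \<cdot> i1 \<cdot> pI" "h1 \<cdot> y = h1 \<cdot> k2 \<cdot> pK"
    by (rule maltsev_operation[OF kp1 kp2 pb jointly_monic_commute[OF jm]])
  show ?thesis
    by (rule that[of "y \<cdot> u"]) (use A u y cmp_reassoc[OF y(4)] cmp_reassoc[OF y(5)] in simp_all)
qed

subsection \<open>Perpendicular kernels\<close>

lemma perp_common_factor_zero:
  assumes perp: "perp C g m"
    and a: "arr a" "trg a = src g" and b: "arr b" "trg b = src m" "src b = src a"
    and gm: "g \<cdot> a = m \<cdot> b" and "arr g" "arr m"
  shows "g \<cdot> a = zero_map (src a) (trg g)"
proof -
  have tg: "trg g = trg m" and meet_zero: "\<forall>p q. is_pullback C g m p q \<longrightarrow> zero_obj C (src p)"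
    using perp unfolding perp_def by blast+
  obtain p q where pb: "is_pullback C g m p q" by (rule pullback_exists[OF assms(8,9) tg])
  note P = pullbackD[OF pb]
  define D where "D = src p"
  have "zero_obj C D" using meet_zero pb unfolding D_def by blast
  then have "p = zero_map D (trg p)" by (rule zero_obj_map_zero) (use P D_def in simp_all)
  then have p: "p = zero_map D (src g)" unfolding P(6) .
  obtain u where u: "arr u" "src u = src a" "trg u = src p" "p \<cdot> u = a"
    by (rule pullback_factor[OF pb a(1) b(1) b(3) a(2) b(2) gm])
  have "g \<cdot> a = g \<cdot> p \<cdot> u" using u(4) by simp
  also have "\<dots> = g \<cdot> zero_map D (src g) \<cdot> u" by (simp only: p)
  also have "\<dots> = zero_map (src a) (trg g)" using u P D_def ob_src[OF a(1)] by simp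
  finally show ?thesis .
qed

lemma perp_kernels_jointly_monic:
  assumes Kg: "is_kernel C g hg" and Km: "is_kernel C m hm" and perp: "perp C g m"
  shows "jointly_monic hm hg"
proof -
  note g = is_kernelD[OF Kg] and m = is_kernelD[OF Km]
  have A: "src hg = src hm" using g m perp unfolding perp_def by simp
  have ob: "ob (trg hm)" "ob (trg hg)" using g m by simp_all
  obtain q1 q2 where pr: "is_product (trg hm) (trg hg) q1 q2" using product_exists[OF ob] .
  note Q = pullbackD[OF pr]
  obtain G where G: "arr G" "src G = src hm" "trg G = src q1" "q1 \<cdot> G = hm" "q2 \<cdot> G = hg"
    using product_pair[OF pr ob, of hm hg] g m A by auto
  have "monic C G"
  proof (rule monic_if_trivial_kernel[OF G(1)])
    fix x assume x: "arr x" "trg x = src G" "G \<cdot> x = zero_map (src x) (trg G)"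
    have "q1 \<cdot> G \<cdot> x = q1 \<cdot> zero_map (src x) (trg G)" "q2 \<cdot> G \<cdot> x = q2 \<cdot> zero_map (src x) (trg G)"
      by (simp_all only: x(3))
    then have hx: "hm \<cdot> x = zero_map (src x) (trg hm)" "hg \<cdot> x = zero_map (src x) (trg hg)"
      using cmp_reassoc[OF G(4)] cmp_reassoc[OF G(5)] x(1,2) G(1-3) Q ob by simp_all
    have tx: "trg x = src hg" "trg x = src hm" using x(2) G(2) A by simp_all
    obtain a where a: "arr a" "src a = src x" "trg a = src g" "g \<cdot> a = x"
      by (rule kernel_factor[OF Kg x(1) tx(1) hx(2)])
    obtain b where b: "arr b" "src b = src x" "trg b = src m" "m \<cdot> b = x"
      by (rule kernel_factor[OF Km x(1) tx(2) hx(1)])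
    have "x = g \<cdot> a" using a by simp
    also have "\<dots> = zero_map (src a) (trg g)"
      by (rule perp_common_factor_zero[OF perp a(1,3) b(1,3)]) (use a b g m in simp_all)
    also have "\<dots> = zero_map (src x) (src G)" using a(2) g(3) A G(2) by simp
    finally show "x = zero_map (src x) (src G)" .
  qed
  then show ?thesis
    using monic_iff_jointly_monic[OF pr ob G(1,3,4,5)] by simp
qed

subsection \<open>Quotients by kernel relations\<close>

context
  fixes h1 h2 i1 i2 k1 k2 pI pK
  assumes jm: "jointly_monic h1 h2"
    and kp1: "is_pullback C h1 h1 i1 i2" and kp2: "is_pullback C h2 h2 k1 k2"
    and pb: "is_pullback C i2 k1 pI pK"
begin

lemma composite_rel_jointly_monic: "jointly_monic (i1 \<cdot> pI) (k2 \<cdot> pK)"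
proof -
  note A = composite_rel_arrows[OF kp1 kp2 pb]
  note reassoc = cmp_reassoc[OF A(19)] cmp_reassoc[OF A(20)] cmp_reassoc[OF A(21)]
  show ?thesis
    unfolding jointly_monic_def
  proof (intro conjI allI impI)
    fix u v
    assume "arr u \<and> arr v \<and> trg u = src (i1 \<cdot> pI) \<and> trg v = src (i1 \<cdot> pI) \<and> src v = src u \<and>
      (i1 \<cdot> pI) \<cdot> u = (i1 \<cdot> pI) \<cdot> v \<and> (k2 \<cdot> pK) \<cdot> u = (k2 \<cdot> pK) \<cdot> v"
    then have uv0: "arr u" "arr v" "trg u = src (i1 \<cdot> pI)" "trg v = src (i1 \<cdot> pI)" "src v = src u"
      and "(i1 \<cdot> pI) \<cdot> u = (i1 \<cdot> pI) \<cdot> v" "(k2 \<cdot> pK) \<cdot> u = (k2 \<cdot> pK) \<cdot> v"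
      by blast+
    then have uv: "arr u" "arr v" "trg u = src pI" "trg v = src pI" "src v = src u"
      and e1: "i1 \<cdot> pI \<cdot> u = i1 \<cdot> pI \<cdot> v" and e2: "k2 \<cdot> pK \<cdot> u = k2 \<cdot> pK \<cdot> v"
      using A by simp_all
    have "h1 \<cdot> i1 \<cdot> pI \<cdot> u = h1 \<cdot> i1 \<cdot> pI \<cdot> v" "h2 \<cdot> k2 \<cdot> pK \<cdot> u = h2 \<cdot> k2 \<cdot> pK \<cdot> v"
      by (simp_all only: e1 e2)
    then have "h1 \<cdot> i2 \<cdot> pI \<cdot> u = h1 \<cdot> i2 \<cdot> pI \<cdot> v" "h2 \<cdot> i2 \<cdot> pI \<cdot> u = h2 \<cdot> i2 \<cdot> pI \<cdot> v"
      using uv A reassoc by simp_all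
    then have e3: "i2 \<cdot> pI \<cdot> u = i2 \<cdot> pI \<cdot> v"
      using jointly_monicD[OF jm, of "i2 \<cdot> pI \<cdot> u" "i2 \<cdot> pI \<cdot> v"] uv A by simp
    have "pI \<cdot> u = pI \<cdot> v"
      by (rule pullback_unique[OF kp1]) (use uv A e1 e3 in simp_all)
    moreover have "pK \<cdot> u = pK \<cdot> v"
      by (rule pullback_unique[OF kp2]) (use uv A e2 e3 reassoc in simp_all)
    ultimately show "u = v"
      by (rule pullback_unique[OF pb, rotated 5]) (use uv A in simp_all)
  qed (use A in simp_all)
qed

lemma composite_rel_sym:
  assumes "rel_mem C (i1 \<cdot> pI) (k2 \<cdot> pK) x y"
  shows "rel_mem C (i1 \<cdot> pI) (k2 \<cdot> pK) y x"
proof -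
  note A = composite_rel_arrows[OF kp1 kp2 pb]
  note memI = composite_rel_memI[OF kp1 kp2 pb] and memD = composite_rel_memD[OF kp1 kp2 pb]
  from assms(1) obtain b where xy: "arr x" "arr y" "trg x = src h1" "trg y = src h1" "src y = src x"
    and b: "arr b" "src b = src x" "trg b = src h1" "h1 \<cdot> x = h1 \<cdot> b" "h2 \<cdot> b = h2 \<cdot> y"
    by (rule memD)
  obtain b' where "arr b'" "src b' = src x" "trg b' = src h1" "h2 \<cdot> x = h2 \<cdot> b'" "h1 \<cdot> b' = h1 \<cdot> y"
    by (rule kernel_relations_permute[OF jm xy(1,3) b(1,3,2) xy(2,4,5) b(4,5)])
  then show ?thesis using memI[of y x b'] xy by simp
qed

lemma composite_rel_trans:
  assumes "rel_mem C (i1 \<cdot> pI) (k2 \<cdot> pK) x y" "rel_mem C (i1 \<cdot> pI) (k2 \<cdot> pK) y z"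
  shows "rel_mem C (i1 \<cdot> pI) (k2 \<cdot> pK) x z"
proof -
  note A = composite_rel_arrows[OF kp1 kp2 pb]
  note memI = composite_rel_memI[OF kp1 kp2 pb] and memD = composite_rel_memD[OF kp1 kp2 pb]
  from assms(1) obtain b where xy: "arr x" "arr y" "trg x = src h1" "trg y = src h1" "src y = src x"
    and b: "arr b" "src b = src x" "trg b = src h1" "h1 \<cdot> x = h1 \<cdot> b" "h2 \<cdot> b = h2 \<cdot> y"
    by (rule memD)
  from assms(2) obtain d where yz: "arr z" "trg z = src h1" "src z = src y"
    and d: "arr d" "src d = src y" "trg d = src h1" "h1 \<cdot> y = h1 \<cdot> d" "h2 \<cdot> d = h2 \<cdot> z"
    by (rule memD)
  have jm': "jointly_monic h2 h1" by (rule jointly_monic_commute[OF jm])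
  have "trg b = src h2" "trg y = src h2" "src y = src b" "trg d = src h2" "src d = src b"
    using A xy b d by simp_all
  then obtain b' where "arr b'" "src b' = src b" "trg b' = src h2" "h1 \<cdot> b = h1 \<cdot> b'" "h2 \<cdot> b' = h2 \<cdot> d"
    using kernel_relations_permute[OF jm' b(1) _ xy(2) _ _ d(1) _ _ b(5) d(4)] by blast
  then show ?thesis using memI[of x z b'] xy yz b d A by simp
qed

lemma composite_rel_equiv: "equiv_rel C (i1 \<cdot> pI) (k2 \<cdot> pK)"
proof -
  note A = composite_rel_arrows[OF kp1 kp2 pb]
  note memI = composite_rel_memI[OF kp1 kp2 pb]
  note sym = composite_rel_sym and trans = composite_rel_trans
  have jm_rel: "jointly_monic (i1 \<cdot> pI) (k2 \<cdot> pK)" by (rule composite_rel_jointly_monic)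
  show ?thesis
    unfolding equiv_rel_def
  proof (intro conjI ballI allI impI)
    fix u v assume "arr u" "arr v" "trg u = src (i1 \<cdot> pI) \<and> trg v = src (i1 \<cdot> pI) \<and> src u = src v \<and>
      (i1 \<cdot> pI) \<cdot> u = (i1 \<cdot> pI) \<cdot> v \<and> (k2 \<cdot> pK) \<cdot> u = (k2 \<cdot> pK) \<cdot> v"
    then show "u = v" by (intro jointly_monicD[OF jm_rel, of u v]) simp_all
  next
    fix x assume "arr x" "trg x = trg (i1 \<cdot> pI)"
    then show "rel_mem C (i1 \<cdot> pI) (k2 \<cdot> pK) x x" by (intro memI[of x x x]) (use A in simp_all)
  next
    fix x y z assume "rel_mem C (i1 \<cdot> pI) (k2 \<cdot> pK) x y \<and> rel_mem C (i1 \<cdot> pI) (k2 \<cdot> pK) y z"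
    then show "rel_mem C (i1 \<cdot> pI) (k2 \<cdot> pK) x z" using trans by blast
  qed (use A sym in simp_all)
qed

end

lemma coequalizer_rel_mem:
  assumes cq: "is_coequalizer C r1 r2 e" and "rel_mem C r1 r2 x y"
  shows "e \<cdot> x = e \<cdot> y"
proof -
  note E = coequalizerD[OF cq]
  obtain u where u: "arr u" "trg u = src r1" "r1 \<cdot> u = x" "r2 \<cdot> u = y"
    using assms(2) by (rule rel_memE)
  have "e \<cdot> r1 \<cdot> u = e \<cdot> r2 \<cdot> u" using cmp_reassoc[OF E(7)] u(1,2) E by simp
  then show ?thesis unfolding u(3,4) .
qed

lemma equiv_rel_effective:
  assumes "equiv_rel C r1 r2"
  obtains e where "is_coequalizer C r1 r2 e"
    "\<And>x y. arr x \<Longrightarrow> arr y \<Longrightarrow> trg x = trg r1 \<Longrightarrow> trg y = trg r1 \<Longrightarrow> src y = src x \<Longrightarrow>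
      e \<cdot> x = e \<cdot> y \<Longrightarrow> rel_mem C r1 r2 x y"
proof -
  obtain f where kp: "is_pullback C f f r1 r2" using assms by (rule equiv_rel_kernel_pair)
  obtain e where cq: "is_coequalizer C r1 r2 e" using kp by (rule kernel_pair_coequalizer)
  note P = pullbackD[OF kp] and E = coequalizerD[OF cq]
  obtain w where w: "arr w" "src w = trg e" "w \<cdot> e = f"
    using coequalizer_factor[OF cq P(1)] P by metis
  have "rel_mem C r1 r2 x y"
    if xy: "arr x" "arr y" "trg x = trg r1" "trg y = trg r1" "src y = src x" "e \<cdot> x = e \<cdot> y" for x y
  proof -
    have "w \<cdot> e \<cdot> x = w \<cdot> e \<cdot> y" using xy(6) by simp
    then have "f \<cdot> x = f \<cdot> y" using cmp_reassoc[OF w(3)] w E xy(1-5) by simp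
    then obtain u where "arr u" "trg u = src r1" "r1 \<cdot> u = x" "r2 \<cdot> u = y"
      using pullback_factor[OF kp xy(1,2,5)] xy P by metis
    then show ?thesis by (rule rel_memI)
  qed
  with cq show ?thesis by (rule that)
qed

lemma kernel_pair_quotient_eq_iff:
  assumes kp: "is_pullback C h h k1 k2" and cq: "is_coequalizer C k1 k2 e"
    and x: "arr x" "arr x'" "trg x = src h" "trg x' = src h" "src x' = src x"
  shows "e \<cdot> x = e \<cdot> x' \<longleftrightarrow> h \<cdot> x = h \<cdot> x'"
proof
  note P = pullbackD[OF kp] and E = coequalizerD[OF cq]
  obtain w where w: "arr w" "src w = trg e" "w \<cdot> e = h"
    using coequalizer_factor[OF cq P(1)] P by metis
  assume "e \<cdot> x = e \<cdot> x'"
  then have "w \<cdot> e \<cdot> x = w \<cdot> e \<cdot> x'" by simp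
  then show "h \<cdot> x = h \<cdot> x'" using cmp_reassoc[OF w(3)] w E x P by simp
next
  assume "h \<cdot> x = h \<cdot> x'"
  then obtain u where "arr u" "trg u = src k1" "k1 \<cdot> u = x" "k2 \<cdot> u = x'"
    using pullback_factor[OF kp x(1,2,5,3,4)] by metis
  then have "rel_mem C k1 k2 x x'" by (rule rel_memI)
  then show "e \<cdot> x = e \<cdot> x'" by (rule coequalizer_rel_mem[OF cq])
qed

lemma coequalizer_monic_diagonal:
  assumes cq: "is_coequalizer C f1 f2 c" and M: "monic C M"
    and y: "arr y" "src y = trg c" and i: "arr i" "trg i = src M" "src i = src c"
    and sq: "y \<cdot> c = M \<cdot> i"
  obtains z where "arr z" "src z = trg c" "trg z = src M" "M \<cdot> z = y"
proof -
  note E = coequalizerD[OF cq]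
  have Ma: "arr M" using M unfolding monic_def by simp
  have "M \<cdot> i \<cdot> f1 = M \<cdot> i \<cdot> f2"
    using cmp_reassoc[OF sq[symmetric]] cmp_reassoc[OF E(7)] y i E Ma by (metis cmp_assoc)
  then have "i \<cdot> f1 = i \<cdot> f2"
    using monicD[OF M, of "i \<cdot> f1" "i \<cdot> f2"] i E Ma by simp
  then obtain z where z: "arr z" "src z = trg c" "trg z = trg i" "z \<cdot> c = i"
    using coequalizer_factor[OF cq i(1)] i E by metis
  have "trg (y \<cdot> c) = trg (M \<cdot> i)" by (simp only: sq)
  then have "trg y = trg M" using y i E Ma by simp
  have "(M \<cdot> z) \<cdot> c = y \<cdot> c" using z i sq Ma E by simp
  then have "M \<cdot> z = y"
    by (rule coequalizer_epi[OF cq, rotated -1]) (use z i y Ma sq E \<open>trg y = trg M\<close> in simp_all)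
  with z i show ?thesis by (intro that) simp_all
qed

lemma quotient_image_monic:
  assumes Km: "is_kernel C m hm" and jm: "jointly_monic hm hK"
    and kp: "is_pullback C hK hK k1 k2" and q: "is_coequalizer C k1 k2 e"
  shows "monic C (e \<cdot> m)"
  unfolding monic_def
proof (intro conjI ballI impI)
  note M = is_kernelD[OF Km] and K = pullbackD[OF kp] and E = coequalizerD[OF q]
  have h: "arr hK" "src hK = src hm" using jm unfolding jointly_monic_def by simp_all
  show em: "arr (e \<cdot> m)" using M K E h by simp
  fix x x' assume "arr x" "arr x'"
    "trg x = src (e \<cdot> m) \<and> trg x' = src (e \<cdot> m) \<and> src x = src x' \<and> (e \<cdot> m) \<cdot> x = (e \<cdot> m) \<cdot> x'"
  then have x: "arr x" "arr x'" "trg x = src m" "trg x' = src m" "src x' = src x"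
    and "(e \<cdot> m) \<cdot> x = (e \<cdot> m) \<cdot> x'" using M K E h by simp_all
  then have "e \<cdot> m \<cdot> x = e \<cdot> m \<cdot> x'" using M E K h by simp
  then have "hK \<cdot> m \<cdot> x = hK \<cdot> m \<cdot> x'"
    using kernel_pair_quotient_eq_iff[OF kp q, of "m \<cdot> x" "m \<cdot> x'"] x M h by simp
  moreover have "hm \<cdot> m \<cdot> x = hm \<cdot> m \<cdot> x'" using cmp_reassoc[OF M(4)] x M by simp
  ultimately have "m \<cdot> x = m \<cdot> x'"
    by (intro jointly_monicD[OF jm, of "m \<cdot> x" "m \<cdot> x'"]) (use x M in simp_all)
  then show "x = x'" by (intro monicD[OF kernel_monic[OF Km], of x x']) (use x in simp_all)
qed

lemma kernel_through_coequalizer: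
  assumes q: "is_coequalizer C f g e" and n: "monic C n" "trg n = trg e"
    and t: "arr t" "src t = trg e" "t \<cdot> n = zero_map (src n) (trg t)"
    and image: "\<And>x. arr x \<Longrightarrow> trg x = src e \<Longrightarrow> t \<cdot> e \<cdot> x = zero_map (src x) (trg t) \<Longrightarrow>
      \<exists>i. arr i \<and> src i = src x \<and> trg i = src n \<and> e \<cdot> x = n \<cdot> i"
  shows "is_kernel C n t"
proof (rule is_kernelI)
  note E = coequalizerD[OF q]
  fix y assume y: "arr y" "trg y = src t" "t \<cdot> y = zero_map (src y) (trg t)"
  have "trg e = trg y" using y t by simp
  then obtain a c where pb: "is_pullback C e y a c" by (rule pullback_exists[OF E(3) y(1)])
  note P = pullbackD[OF pb]
  have "regular_epi C c"
    using regular_epi_pullback[OF _ pb] q unfolding regular_epi_def by blast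
  then obtain f1 f2 where cq: "is_coequalizer C f1 f2 c" unfolding regular_epi_def by blast
  have "t \<cdot> e \<cdot> a = t \<cdot> y \<cdot> c" using P by simp
  also have "\<dots> = zero_map (src a) (trg t)" using cmp_reassoc[OF y(3)] y(1) P t by simp
  finally obtain i where i: "arr i" "src i = src a" "trg i = src n" "e \<cdot> a = n \<cdot> i"
    using image[of a] P by auto
  have "y \<cdot> c = n \<cdot> i" using P i by simp
  moreover have "src y = trg c" "src i = src c" using P i by simp_all
  ultimately obtain z where "arr z" "src z = trg c" "trg z = src n" "n \<cdot> z = y"
    using coequalizer_monic_diagonal[OF cq n(1) y(1) _ i(1,3)] by metis
  then show "\<exists>z. arr z \<and> src z = src y \<and> trg z = src n \<and> n \<cdot> z = y"
    using P by auto
qed (use n t n(1)[unfolded monic_def] in simp_all)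

lemma quotient_image_factor:
  assumes Km: "is_kernel C m hm" and jm: "jointly_monic hm hK"
    and kp: "is_pullback C hK hK k1 k2" and q: "is_coequalizer C k1 k2 e"
    and x: "arr x" "trg x = src hm" and b: "arr b" "trg b = src hm" "src b = src x"
    and "hm \<cdot> x = hm \<cdot> b" "hK \<cdot> b = hK \<cdot> zero_map (src x) (src hm)"
  obtains i where "arr i" "src i = src x" "trg i = src m" "e \<cdot> x = (e \<cdot> m) \<cdot> i"
proof -
  note M = is_kernelD[OF Km] and K = pullbackD[OF kp] and E = coequalizerD[OF q]
  have h: "arr hK" "src hK = src hm" using jm unfolding jointly_monic_def by simp_all
  define z where "z = zero_map (src x) (src hm)"
  have z: "arr z" "trg z = src hm" "src z = src x" using x M unfolding z_def by simp_all
  obtain b' where b': "arr b'" "src b' = src x" "trg b' = src hm" "hK \<cdot> x = hK \<cdot> b'" "hm \<cdot> b' = hm \<cdot> z"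
    using kernel_relations_permute[OF jm x b z assms(10) assms(11)[folded z_def]] by blast
  have "hm \<cdot> b' = zero_map (src b') (trg hm)" using b'(2,5) x M unfolding z_def by simp
  then obtain i where i: "arr i" "src i = src b'" "trg i = src m" "m \<cdot> i = b'"
    by (rule kernel_factor[OF Km b'(1,3)])
  have "e \<cdot> x = e \<cdot> b'" using kernel_pair_quotient_eq_iff[OF kp q, of x b'] x b' h by simp
  also have "\<dots> = (e \<cdot> m) \<cdot> i" using i M E K h by simp
  finally show ?thesis using that i b' by simp
qed

text \<open>\<open>eT\<close> is the quotient by the join of the kernel relations of \<open>hm\<close> and \<open>hK\<close>: their
  composite, which is an equivalence relation because they permute, and effective by exactness.
  The comparison map \<open>t\<close> from the quotient \<open>e\<close> to \<open>eT\<close> has kernel \<open>e \<cdot> m\<close>.\<close>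

lemma quotient_image_normal:
  assumes Km: "is_kernel C m hm" and jm: "jointly_monic hm hK"
    and kp: "is_pullback C hK hK k1 k2" and q: "is_coequalizer C k1 k2 e"
  shows "normal_mono C (e \<cdot> m)"
proof -
  note M = is_kernelD[OF Km] and K = pullbackD[OF kp] and E = coequalizerD[OF q]
  have h: "arr hK" "src hK = src hm" using jm unfolding jointly_monic_def by simp_all
  obtain i1 i2 where kp1: "is_pullback C hm hm i1 i2" by (rule pullback_exists[OF M(2) M(2) refl])
  have "trg i2 = trg k1" using pullbackD[OF kp1] K h by simp
  then obtain pI pK where pb: "is_pullback C i2 k1 pI pK"
    by (rule pullback_exists[OF pullbackD(4)[OF kp1] K(3)])
  note R = composite_rel_arrows[OF kp1 kp pb]
  note memI = composite_rel_memI[OF kp1 kp pb] and memD = composite_rel_memD[OF kp1 kp pb]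
  obtain eT where cT: "is_coequalizer C (i1 \<cdot> pI) (k2 \<cdot> pK) eT"
    and reflect: "\<And>x y. arr x \<Longrightarrow> arr y \<Longrightarrow> trg x = trg (i1 \<cdot> pI) \<Longrightarrow> trg y = trg (i1 \<cdot> pI) \<Longrightarrow>
      src y = src x \<Longrightarrow> eT \<cdot> x = eT \<cdot> y \<Longrightarrow> rel_mem C (i1 \<cdot> pI) (k2 \<cdot> pK) x y"
    by (rule equiv_rel_effective[OF composite_rel_equiv[OF jm kp1 kp pb]]) blast
  note T = coequalizerD[OF cT]
  have "rel_mem C (i1 \<cdot> pI) (k2 \<cdot> pK) k1 k2" by (rule memI[of k1 k2 k1]) (use R K in simp_all)
  then have "eT \<cdot> k1 = eT \<cdot> k2" by (rule coequalizer_rel_mem[OF cT])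
  then obtain t where t: "arr t" "src t = trg e" "trg t = trg eT" "t \<cdot> e = eT"
    using coequalizer_factor[OF q T(3)] T R K by auto
  have te: "t \<cdot> e \<cdot> x = eT \<cdot> x" if "arr x" "trg x = src hm" for x
    using cmp_reassoc[OF t(4)] that t E K h by simp
  have eT_zero: "eT \<cdot> zero_map (src x) (src hm) = zero_map (src x) (trg t)" if "arr x" for x
    using that T R t M by simp
  have em: "trg (e \<cdot> m) = trg e" "src e = src hm" using M E K h by simp_all
  show ?thesis
    unfolding normal_mono_def
  proof (rule exI, rule kernel_through_coequalizer[OF q quotient_image_monic[OF Km jm kp q] em(1) t(1,2)])
    have "rel_mem C (i1 \<cdot> pI) (k2 \<cdot> pK) (zero_map (src m) (src hm)) m"
      by (rule memI[of _ _ m]) (use M h in simp_all)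
    then have "eT \<cdot> zero_map (src m) (src hm) = eT \<cdot> m" by (rule coequalizer_rel_mem[OF cT])
    then show "t \<cdot> e \<cdot> m = zero_map (src (e \<cdot> m)) (trg t)" using te[of m] eT_zero[of m] M E K h by simp
  next
    fix x assume x: "arr x" "trg x = src e" "t \<cdot> e \<cdot> x = zero_map (src x) (trg t)"
    then have x': "trg x = src hm" "eT \<cdot> x = eT \<cdot> zero_map (src x) (src hm)" using te eT_zero em by simp_all
    have "rel_mem C (i1 \<cdot> pI) (k2 \<cdot> pK) x (zero_map (src x) (src hm))"
      by (rule reflect[OF x(1) _ _ _ _ x'(2)]) (use x(1) x' R M in simp_all)
    then obtain b where "arr b" "src b = src x" "trg b = src hm" "hm \<cdot> x = hm \<cdot> b"
        "hK \<cdot> b = hK \<cdot> zero_map (src x) (src hm)"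
      by (rule memD)
    then obtain i where "arr i" "src i = src x" "trg i = src m" "e \<cdot> x = (e \<cdot> m) \<cdot> i"
      using quotient_image_factor[OF Km jm kp q x(1) x'(1)] by blast
    then show "\<exists>i. arr i \<and> src i = src x \<and> trg i = src (e \<cdot> m) \<and> e \<cdot> x = (e \<cdot> m) \<cdot> i"
      using M E K h by auto
  qed
qed
subsection \<open>Essential normal monics\<close>

lemma kernel_perp_if_comp_monic:
  assumes K: "is_kernel C k f" and fm: "monic C (f \<cdot> m)" and m: "arr m" "trg m = src f"
  shows "perp C k m"
  unfolding perp_def
proof (intro conjI allI impI)
  note k = is_kernelD[OF K]
  show "trg k = trg m" using k m by simp
  fix p q assume pb: "is_pullback C k m p q"
  note P = pullbackD[OF pb]
  define D where "D = src p"
  have D: "ob D" "src p = D" "src q = D" using P D_def by simp_all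
  have "(f \<cdot> m) \<cdot> q = f \<cdot> k \<cdot> p" using P k m by (metis cmp_assoc)
  also have "\<dots> = (f \<cdot> m) \<cdot> zero_map D (src m)" using cmp_reassoc[OF k(4)] P(1-8) k m D by simp
  finally have q: "q = zero_map D (src m)"
    using monicD[OF fm, of q "zero_map D (src m)"] P k m D by simp
  have "k \<cdot> p = k \<cdot> zero_map D (src k)" using P q k m D by simp
  then have p: "p = zero_map D (src k)"
    using monicD[OF kernel_monic[OF K], of p "zero_map D (src k)"] P k D by simp
  have "idn D = zero_map D D"
    by (rule pullback_unique[OF pb]) (use P p q D in simp_all)
  then show "zero_obj C (src p)" using zero_obj_iff_idn_zero D by simp
qed

lemma monic_if_zero_arrow_kernel:
  assumes K: "is_kernel C k f" and "zero_arrow C k"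
  shows "monic C f"
proof (rule monic_if_trivial_kernel)
  note k = is_kernelD[OF K]
  show "arr f" by (fact k(2))
  have k0: "k = zero_map (src k) (src f)" using assms(2) k unfolding zero_arrow_iff by simp
  fix x assume x: "arr x" "trg x = src f" "f \<cdot> x = zero_map (src x) (trg f)"
  then obtain u where u: "arr u" "src u = src x" "trg u = src k" "k \<cdot> u = x"
    by (rule kernel_factor[OF K])
  have "x = zero_map (src k) (src f) \<cdot> u" using u k0 by simp
  also have "\<dots> = zero_map (src x) (src f)" using u k by simp
  finally show "x = zero_map (src x) (src f)" .
qed

lemma essential_mono_imp_normal_comp_monic:
  assumes "essential_mono C m"
  shows "\<forall>f\<in>Arr C. Dom C f = Cod C m \<and> normal_mono C (Comp C f m) \<longrightarrow> monic C f"
  using assms normal_mono_monic unfolding essential_mono_def by blast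

lemma normal_comp_monic_imp_perp_zero:
  assumes nm: "normal_mono C m"
    and H: "\<forall>f\<in>Arr C. Dom C f = Cod C m \<and> normal_mono C (Comp C f m) \<longrightarrow> monic C f"
    and ng: "normal_mono C g" and perp: "perp C g m"
  shows "zero_arrow C g"
proof -
  obtain hm where Km: "is_kernel C m hm" using nm unfolding normal_mono_def by blast
  obtain hK where Kg: "is_kernel C g hK" using ng unfolding normal_mono_def by blast
  note M = is_kernelD[OF Km] and G = is_kernelD[OF Kg]
  have jm: "jointly_monic hm hK" by (rule perp_kernels_jointly_monic[OF Kg Km perp])
  obtain k1 k2 where kp: "is_pullback C hK hK k1 k2" by (rule pullback_exists[OF G(2) G(2) refl])
  obtain e where q: "is_coequalizer C k1 k2 e" using kp by (rule kernel_pair_coequalizer)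
  note K = pullbackD[OF kp] and E = coequalizerD[OF q]
  have e: "arr e" "src e = trg m" using E K M G perp unfolding perp_def by simp_all
  have "normal_mono C (e \<cdot> m)" by (rule quotient_image_normal[OF Km jm kp q])
  then have e_monic: "monic C e" using H e by simp
  have g: "arr g" "trg g = src hK" "hK \<cdot> g = hK \<cdot> zero_map (src g) (src hK)" using G by simp_all
  then have "e \<cdot> g = e \<cdot> zero_map (src g) (src hK)"
    using kernel_pair_quotient_eq_iff[OF kp q, of g "zero_map (src g) (src hK)"] G by simp
  then have "g = zero_map (src g) (src hK)"
    using monicD[OF e_monic, of g "zero_map (src g) (src hK)"] g E K by simp
  then show ?thesis using g zero_arrow_iff by (metis zero_arrow_zero_map ob_src ob_trg)
qed

lemma perp_zero_imp_essential_mono: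
  assumes nm: "normal_mono C m"
    and H: "\<forall>g. normal_mono C g \<and> perp C g m \<longrightarrow> zero_arrow C g"
  shows "essential_mono C m"
  unfolding essential_mono_def
proof (intro conjI ballI impI)
  show m: "monic C m" by (rule normal_mono_monic[OF nm])
  fix f assume f: "arr f" "src f = trg m \<and> monic C (f \<cdot> m)"
  obtain k where K: "is_kernel C k f" using kernel_exists f(1) by blast
  have "perp C k m"
    by (rule kernel_perp_if_comp_monic[OF K]) (use f m in \<open>simp_all add: monic_def\<close>)
  moreover have "normal_mono C k" using K unfolding normal_mono_def by blast
  ultimately have "zero_arrow C k" using H by blast
  then show "monic C f" by (rule monic_if_zero_arrow_kernel[OF K])
qed

end

theorem mainTheorem6:
  fixes C :: "('o, 'a) cat" and m :: 'a
  assumes "semi_abelian C"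
    and "normal_mono C m"
  shows "(essential_mono C m \<longleftrightarrow>
            (\<forall>f\<in>Arr C. Dom C f = Cod C m \<and> normal_mono C (Comp C f m) \<longrightarrow> monic C f))
       \<and> ((\<forall>f\<in>Arr C. Dom C f = Cod C m \<and> normal_mono C (Comp C f m) \<longrightarrow> monic C f) \<longleftrightarrow>
            (\<forall>g. normal_mono C g \<and> perp C g m \<longrightarrow> zero_arrow C g))"
proof -
  interpret semi_abelian_category C by unfold_locales (fact assms(1))
  have "essential_mono C m \<Longrightarrow>
      \<forall>f\<in>Arr C. Dom C f = Cod C m \<and> normal_mono C (Comp C f m) \<longrightarrow> monic C f"
    by (rule essential_mono_imp_normal_comp_monic)
  moreover have "(\<forall>f\<in>Arr C. Dom C f = Cod C m \<and> normal_mono C (Comp C f m) \<longrightarrow> monic C f) \<Longrightarrow>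
      \<forall>g. normal_mono C g \<and> perp C g m \<longrightarrow> zero_arrow C g"
    using normal_comp_monic_imp_perp_zero[OF assms(2)] by blast
  moreover have "(\<forall>g. normal_mono C g \<and> perp C g m \<longrightarrow> zero_arrow C g) \<Longrightarrow> essential_mono C m"
    by (rule perp_zero_imp_essential_mono[OF assms(2)])
  ultimately show ?thesis by blast
qed
end
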